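(* Let $\mathbb{T}^2=\mathbb{C}^2/\Lambda$ be a two-dimensional complex torus with projection $\pi:\mathbb{C}^2\to\mathbb{T}^2$, and let $(X,\mathcal{L})$ be a minimal lamination by Riemann surfaces holomorphically embedded in $\mathbb{T}^2$. For $\epsilon\in\mathbb{C}$ let $\tau_{(0,\epsilon)}$ be the automorphism of $\mathbb{T}^2$ induced by the translation $(x_1,x_2)\mapsto(x_1,x_2+\epsilon)$ of $\mathbb{C}^2$. Suppose there is a sequence $\epsilon_n\to 0$, $\epsilon_n\neq 0$, such that $\tau_{(0,\epsilon_n)}(\mathcal{L})=\mathcal{L}$ for every $n$. Then either every point of $X$ is vertical, or $X$ has no vertical points.
   Context: A lamination by Riemann surfaces embedded in a complex surface is a compact set $X$ covered by flow boxes in which $X$ is a union of disjoint holomorphic discs (plaques) varying continuously in a transversal parameter; leaves are maximal connected unions of plaques. It is minimal if every leaf is dense in $X$. A point $p\in X$ is vertical if, lifting to $\mathbb{C}^2$ via $\pi$, the tangent line of the leaf at $p$ is $\{0\}\times\mathbb{C}$ (i.e. the unit tangent vector is $(0,1)$); it is horizontal if the tangent line is $\mathbb{C}\times\{0\}$. *)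

theory Defs
  imports "HOL-Analysis.Analysis"
begin

text \<open>We work on the universal cover C^2 = complex \<times> complex of the torus T^2 = C^2/Lambda.
A compact set X in T^2 is represented by its lift Xl = pi^{-1}(X), a closed Lambda-invariant set.
A lamination is represented by a Lambda-invariant family P of (lifted) plaques: holomorphic
injective immersions of the unit disc into C^2 with image in Xl, pairwise compatible
(they overlap in open sets), such that every point of Xl has a flow box whose plaques belong to P.\<close>

type_synonym c2 = "complex \<times> complex"

definition lattice :: "c2 set \<Rightarrow> bool" where
  "lattice \<Lambda> \<longleftrightarrow> 0 \<in> \<Lambda> \<and> (\<forall>a\<in>\<Lambda>. \<forall>b\<in>\<Lambda>. a + b \<in> \<Lambda> \<and> - a \<in> \<Lambda>)
     \<and> (\<exists>r>0. \<forall>a\<in>\<Lambda>. a \<noteq> 0 \<longrightarrow> r \<le> norm a)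
     \<and> span \<Lambda> = UNIV"

definition disc :: "complex set" where "disc = ball 0 1"

definition dvec :: "(complex \<Rightarrow> c2) \<Rightarrow> complex \<Rightarrow> c2" where
  "dvec f z = (deriv (\<lambda>w. fst (f w)) z, deriv (\<lambda>w. snd (f w)) z)"

definition holo_disc :: "(complex \<Rightarrow> c2) \<Rightarrow> bool" where
  "holo_disc f \<longleftrightarrow> (\<lambda>w. fst (f w)) holomorphic_on disc \<and> (\<lambda>w. snd (f w)) holomorphic_on disc
     \<and> inj_on f disc \<and> (\<forall>z\<in>disc. dvec f z \<noteq> 0)"

definition compatible :: "(complex \<Rightarrow> c2) \<Rightarrow> (complex \<Rightarrow> c2) \<Rightarrow> bool" where
  "compatible f g \<longleftrightarrow> open {z\<in>disc. f z \<in> g ` disc} \<and> open {z\<in>disc. g z \<in> f ` disc}"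

definition flow_box :: "c2 set \<Rightarrow> (complex \<Rightarrow> c2) set \<Rightarrow> c2 \<Rightarrow> bool" where
  "flow_box Xl P p \<longleftrightarrow> (\<exists>U T \<phi> \<psi>. open U \<and> p \<in> U \<and> T \<subseteq> Xl \<inter> U
       \<and> homeomorphism (disc \<times> T) (Xl \<inter> U) (\<lambda>(z,t). \<phi> z t) \<psi>
       \<and> (\<forall>t\<in>T. \<phi> 0 t = t \<and> (\<lambda>z. \<phi> z t) \<in> P))"

definition lamination :: "c2 set \<Rightarrow> c2 set \<Rightarrow> (complex \<Rightarrow> c2) set \<Rightarrow> bool" where
  "lamination \<Lambda> Xl P \<longleftrightarrow> lattice \<Lambda> \<and> closed Xl
     \<and> (\<forall>a\<in>\<Lambda>. (\<lambda>q. q + a) ` Xl = Xl)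
     \<and> (\<forall>f\<in>P. holo_disc f \<and> f ` disc \<subseteq> Xl \<and> (\<forall>a\<in>\<Lambda>. (\<lambda>z. f z + a) \<in> P))
     \<and> (\<forall>f\<in>P. \<forall>g\<in>P. compatible f g)
     \<and> (\<forall>p\<in>Xl. flow_box Xl P p)"

definition same_plaque :: "(complex \<Rightarrow> c2) set \<Rightarrow> (c2 \<times> c2) set" where
  "same_plaque P = {(p,q). \<exists>f\<in>P. p \<in> f ` disc \<and> q \<in> f ` disc}"

definition leaf :: "(complex \<Rightarrow> c2) set \<Rightarrow> c2 \<Rightarrow> c2 set" where
  "leaf P p = {q. (p,q) \<in> (same_plaque P)\<^sup>*}"

text \<open>Minimal: the leaf of pi(p) in the torus, whose lift is the union of the Lambda-translates
of the lifted leaf through p, is dense in X.\<close>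
definition minimal_lamination :: "c2 set \<Rightarrow> c2 set \<Rightarrow> (complex \<Rightarrow> c2) set \<Rightarrow> bool" where
  "minimal_lamination \<Lambda> Xl P \<longleftrightarrow> lamination \<Lambda> Xl P \<and>
     (\<forall>p\<in>Xl. Xl \<subseteq> closure (\<Union>a\<in>\<Lambda>. (\<lambda>q. q + a) ` leaf P p))"

text \<open>The translation tau_v preserves the lamination: it preserves X and maps plaques to
discs compatible with all plaques (i.e. it maps leaves to leaves).\<close>
definition trans_invariant :: "c2 set \<Rightarrow> (complex \<Rightarrow> c2) set \<Rightarrow> c2 \<Rightarrow> bool" where
  "trans_invariant Xl P v \<longleftrightarrow> (\<lambda>q. q + v) ` Xl = Xl
     \<and> (\<forall>f\<in>P. \<forall>g\<in>P. compatible (\<lambda>z. f z + v) g)"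

text \<open>Tangent line at p is {0} \<times> C, i.e. the tangent vector has vanishing first component.\<close>
definition vertical :: "(complex \<Rightarrow> c2) set \<Rightarrow> c2 \<Rightarrow> bool" where
  "vertical P p \<longleftrightarrow> (\<exists>f\<in>P. \<exists>z\<in>disc. f z = p \<and> fst (dvec f z) = 0)"

definition horizontal :: "(complex \<Rightarrow> c2) set \<Rightarrow> c2 \<Rightarrow> bool" where
  "horizontal P p \<longleftrightarrow> (\<exists>f\<in>P. \<exists>z\<in>disc. f z = p \<and> snd (dvec f z) = 0)"

end

theory Submission
  imports Defs "HOL-Complex_Analysis.Complex_Analysis"
begin

(* If some point is vertical, the plaque f through it lies in a vertical line {c} \<times> \<complex>. Otherwise,
  near that point the plaque is a graph x1 = F(x2) with F'(p2) = 0 and F' not identically zero.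
  By Hurwitz's theorem applied to the difference quotients (F x - F (x - \<epsilon>n)) / \<epsilon>n, which
  converge to F', there are points with F x = F (x - \<epsilon>n) for arbitrarily small \<epsilon>n: there the
  translated plaque meets the plaque itself, so invariance of the lamination under the translation
  by (0, \<epsilon>n) forces F (y + \<epsilon>n) = F y near x - \<epsilon>n, hence on a whole disc, and p2 + \<epsilon>n is
  another zero of F' arbitrarily close to p2. Vertical plaques propagate along leaves and under the
  lattice, and in a flow box verticality of the plaques is a closed condition; so by minimality
  every point is vertical. *)

lemma uniform_limit_difference_quotients:
  fixes F :: "complex \<Rightarrow> complex"
  assumes hol: "F holomorphic_on ball a R" and "r < R"
    and \<epsilon>: "\<epsilon> \<longlonglongrightarrow> 0" "\<forall>n. \<epsilon> n \<noteq> 0"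
  shows "uniform_limit (ball a r) (\<lambda>n x. (F x - F (x - \<epsilon> n)) / \<epsilon> n) (deriv F) sequentially"
proof (rule uniform_limitI)
  fix e :: real assume "e > 0"
  define C where "C = cball a ((r + R) / 2)"
  have CR: "C \<subseteq> ball a R" unfolding C_def using \<open>r < R\<close> by (auto simp: subset_eq)
  have "continuous_on C (deriv F)"
    using holomorphic_on_imp_continuous_on[OF holomorphic_deriv[OF hol]] CR
    by (auto intro: continuous_on_subset)
  then have "uniformly_continuous_on C (deriv F)"
    unfolding C_def by (intro compact_uniformly_continuous) auto
  then obtain d where "d > 0" and d: "\<And>u v. u \<in> C \<Longrightarrow> v \<in> C \<Longrightarrow> dist v u < d \<Longrightarrow> dist (deriv F v) (deriv F u) < e / 2"
    unfolding uniformly_continuous_on_def using \<open>e > 0\<close> by (meson half_gt_zero)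
  have "\<forall>\<^sub>F n in sequentially. norm (\<epsilon> n) < min d ((R - r) / 2)"
    by (rule order_tendstoD(2)[OF tendsto_norm_zero[OF \<epsilon>(1)]]) (use \<open>d > 0\<close> \<open>r < R\<close> in simp)
  then show "\<forall>\<^sub>F n in sequentially. \<forall>x\<in>ball a r. dist ((F x - F (x - \<epsilon> n)) / \<epsilon> n) (deriv F x) < e"
  proof (rule eventually_mono, intro ballI)
    fix n x assume \<eta>: "norm (\<epsilon> n) < min d ((R - r) / 2)" and x: "x \<in> ball a r"
    define \<eta> where "\<eta> = \<epsilon> n"
    define S where "S = cball x (norm \<eta>)"
    have SC: "S \<subseteq> C"
    proof
      fix u assume "u \<in> S"
      then have "dist x u \<le> norm \<eta>" unfolding S_def by simp
      then show "u \<in> C"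
        using x \<eta> dist_triangle[of a u x] unfolding C_def \<eta>_def by simp
    qed
    have xC: "x \<in> C" using SC unfolding S_def by auto
    have "(F has_field_derivative deriv F u) (at u within S)" if "u \<in> S" for u
      using holomorphic_derivI[OF hol] that SC CR by blast
    then have der: "((\<lambda>u. F u - deriv F x * u) has_field_derivative deriv F u - deriv F x) (at u within S)"
      if "u \<in> S" for u
      using that by (auto intro!: derivative_eq_intros)
    have bound: "norm (deriv F u - deriv F x) \<le> e / 2" if "u \<in> S" for u
      using d[OF xC, of u] that SC \<eta> unfolding S_def \<eta>_def
      by (force simp: dist_norm norm_minus_commute)
    have "norm ((F x - deriv F x * x) - (F (x - \<eta>) - deriv F x * (x - \<eta>))) \<le> e / 2 * norm (x - (x - \<eta>))"
      by (rule field_differentiable_bound[OF _ der bound]) (auto simp: S_def dist_norm)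
    moreover have "(F x - F (x - \<eta>)) / \<eta> - deriv F x
        = ((F x - deriv F x * x) - (F (x - \<eta>) - deriv F x * (x - \<eta>))) / \<eta>"
      using \<epsilon>(2) unfolding \<eta>_def by (simp add: field_simps)
    ultimately have "norm ((F x - F (x - \<eta>)) / \<eta> - deriv F x) \<le> e / 2"
      using \<epsilon>(2) unfolding \<eta>_def by (simp add: norm_divide divide_le_eq mult.commute)
    then show "dist ((F x - F (x - \<epsilon> n)) / \<epsilon> n) (deriv F x) < e"
      using \<open>e > 0\<close> unfolding \<eta>_def by (simp add: dist_norm)
  qed
qed

lemma translate_coincidence_near_critical_point:
  fixes F :: "complex \<Rightarrow> complex"
  assumes hol: "F holomorphic_on ball a R" and "0 < r" "r < R"
    and crit: "deriv F a = 0" and nonconst: "\<not> deriv F constant_on ball a r"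
    and \<epsilon>: "\<epsilon> \<longlonglongrightarrow> 0" "\<forall>n. \<epsilon> n \<noteq> 0"
  shows "\<exists>n\<ge>N. \<exists>x\<in>ball a r. F x = F (x - \<epsilon> n)"
proof (rule ccontr)
  assume no_coincidence: "\<not> ?thesis"
  have "\<forall>\<^sub>F n in sequentially. norm (\<epsilon> n) < R - r"
    by (rule order_tendstoD(2)[OF tendsto_norm_zero[OF \<epsilon>(1)]]) (use \<open>r < R\<close> in simp)
  then obtain M where M: "\<And>n. n \<ge> M \<Longrightarrow> norm (\<epsilon> n) < R - r"
    unfolding eventually_sequentially by blast
  have rR: "ball a r \<subseteq> ball a R" using \<open>r < R\<close> by (simp add: subset_ball)
  define \<epsilon>' where "\<epsilon>' n = \<epsilon> (n + max M N)" for n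
  define G where "G n x = (F x - F (x - \<epsilon>' n)) / \<epsilon>' n" for n x
  have "deriv F a \<noteq> 0"
  proof (rule Hurwitz_no_zeros[of "ball a r" G "deriv F"])
    show "G n holomorphic_on ball a r" for n
    proof -
      have "norm (\<epsilon>' n) < R - r" using M unfolding \<epsilon>'_def by simp
      then have "x - \<epsilon>' n \<in> ball a R" if "x \<in> ball a r" for x
        using that dist_triangle[of a "x - \<epsilon>' n" x] by (simp add: dist_norm)
      then have "(\<lambda>x. F (x - \<epsilon>' n)) holomorphic_on ball a r"
        by (intro holomorphic_on_compose_gen[OF _ hol, unfolded o_def]) (auto intro: holomorphic_intros)
      moreover have "F holomorphic_on ball a r"
        using hol rR by (rule holomorphic_on_subset)
      ultimately show ?thesis
        unfolding G_def using \<epsilon>(2) \<epsilon>'_def by (intro holomorphic_intros) auto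
    qed
    show "deriv F holomorphic_on ball a r"
      using holomorphic_deriv[OF hol] rR by (auto intro: holomorphic_on_subset)
    have "\<epsilon>' \<longlonglongrightarrow> 0" "\<forall>n. \<epsilon>' n \<noteq> 0"
      unfolding \<epsilon>'_def using \<epsilon> LIMSEQ_ignore_initial_segment by auto
    then show "uniform_limit K G (deriv F) sequentially" if "compact K" "K \<subseteq> ball a r" for K
      unfolding G_def
      by (rule uniform_limit_on_subset[OF uniform_limit_difference_quotients[OF hol \<open>r < R\<close>] that(2)])
    show "G n x \<noteq> 0" if "x \<in> ball a r" for n x
      using no_coincidence that \<epsilon>(2) unfolding G_def \<epsilon>'_def by force
  qed (use nonconst \<open>0 < r\<close> in auto)
  with crit show False by simp
qed

lemma holomorphic_translate_eq_on_ball: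
  fixes F :: "complex \<Rightarrow> complex"
  assumes hol: "F holomorphic_on ball a (2 * \<rho>)" and "norm \<eta> < \<rho>"
    and W: "open W" "x - \<eta> \<in> W" "\<And>y. y \<in> W \<Longrightarrow> F (y + \<eta>) = F y" and "x \<in> ball a \<rho>"
    and "y \<in> ball a \<rho>"
  shows "F y = F (y - \<eta>)"
proof (rule analytic_continuation_open[where f = F and g = "\<lambda>y. F (y - \<eta>)" and s' = "ball a \<rho>"
      and s = "ball a \<rho> \<inter> (\<lambda>y. y - \<eta>) -` W"])
  have "y - \<eta> \<in> ball a (2 * \<rho>)" if "y \<in> ball a \<rho>" for y
    using that \<open>norm \<eta> < \<rho>\<close> dist_triangle[of a "y - \<eta>" y] by (simp add: dist_norm)
  then show "(\<lambda>y. F (y - \<eta>)) holomorphic_on ball a \<rho>"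
    by (intro holomorphic_on_compose_gen[OF _ hol, unfolded o_def]) (auto intro: holomorphic_intros)
  show "F holomorphic_on ball a \<rho>"
  proof (rule holomorphic_on_subset[OF hol subset_ball])
    show "\<rho> \<le> 2 * \<rho>" using \<open>norm \<eta> < \<rho>\<close> norm_ge_zero[of \<eta>] by linarith
  qed
  show "open (ball a \<rho> \<inter> (\<lambda>y. y - \<eta>) -` W)"
    using W(1) by (intro open_Int open_vimage continuous_intros) auto
  show "ball a \<rho> \<inter> (\<lambda>y. y - \<eta>) -` W \<noteq> {}"
    using W(2) \<open>x \<in> ball a \<rho>\<close> by blast
  show "F z = F (z - \<eta>)" if "z \<in> ball a \<rho> \<inter> (\<lambda>y. y - \<eta>) -` W" for z
    using W(3)[of "z - \<eta>"] that by simp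
qed (use \<open>y \<in> ball a \<rho>\<close> in auto)

lemma holomorphic_deriv_nonzero_if_nonconstant:
  fixes F :: "complex \<Rightarrow> complex"
  assumes "F holomorphic_on ball a r" "\<not> F constant_on ball a r"
  obtains \<beta> where "\<beta> \<in> ball a r" "deriv F \<beta> \<noteq> 0"
proof (rule ccontr)
  assume "\<not> thesis"
  with that have "(F has_field_derivative 0) (at y within ball a r)" if "y \<in> ball a r" for y
    using holomorphic_derivI[OF assms(1) open_ball that] that by fastforce
  then have "\<exists>c. \<forall>y\<in>ball a r. F y = c"
    by (intro has_field_derivative_zero_constant) auto
  with assms(2) show False unfolding constant_on_def by blast
qed

lemma deriv_eq_if_translate_eq:
  fixes F :: "complex \<Rightarrow> complex"
  assumes "\<forall>\<^sub>F y in nhds q. F y = F (y - \<eta>)" and "F field_differentiable at (q - \<eta>)"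
  shows "deriv F q = deriv F (q - \<eta>)"
proof -
  have "deriv F q = deriv (\<lambda>y. F (y - \<eta>)) q"
    using assms(1) by (rule deriv_cong_ev) simp
  also have "\<dots> = deriv F (q - \<eta>)"
  proof (rule DERIV_imp_deriv)
    have "(F has_field_derivative deriv F (q - \<eta>)) (at ((\<lambda>y. y - \<eta>) q))"
      using field_differentiable_derivI[OF assms(2)] by simp
    moreover have "((\<lambda>y. y - \<eta>) has_field_derivative 1) (at q)"
      by (rule derivative_eq_intros refl)+ simp
    ultimately show "((\<lambda>y. F (y - \<eta>)) has_field_derivative deriv F (q - \<eta>)) (at q)"
      using DERIV_chain2 by fastforce
  qed
  finally show ?thesis .
qed

lemma holomorphic_constant_if_coincidences_periodic:
  fixes F :: "complex \<Rightarrow> complex"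
  assumes hol: "F holomorphic_on ball a (2 * \<rho>)" and "0 < \<rho>" and crit: "deriv F a = 0"
    and \<epsilon>: "\<epsilon> \<longlonglongrightarrow> 0" "\<forall>n. \<epsilon> n \<noteq> 0"
    and periodic: "\<And>n x. x \<in> ball a \<rho> \<Longrightarrow> norm (\<epsilon> n) < \<rho> \<Longrightarrow> F x = F (x - \<epsilon> n) \<Longrightarrow>
      \<exists>W. open W \<and> x - \<epsilon> n \<in> W \<and> (\<forall>y\<in>W. F (y + \<epsilon> n) = F y)"
  shows "F constant_on ball a \<rho>"
proof (rule ccontr)
  assume "\<not> F constant_on ball a \<rho>"
  have sub: "ball a \<rho> \<subseteq> ball a (2 * \<rho>)" using \<open>0 < \<rho>\<close> by (simp add: subset_ball)
  obtain \<beta> where \<beta>: "\<beta> \<in> ball a \<rho>" "deriv F \<beta> \<noteq> 0"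
    using holomorphic_deriv_nonzero_if_nonconstant[OF holomorphic_on_subset[OF hol sub]]
      \<open>\<not> F constant_on ball a \<rho>\<close> by blast
  have hol': "deriv F holomorphic_on ball a \<rho>"
    using holomorphic_on_subset[OF holomorphic_deriv[OF hol open_ball] sub] .
  obtain \<rho>0 where "0 < \<rho>0" "ball a \<rho>0 \<subseteq> ball a \<rho>" and isolated: "\<And>z. z \<in> ball a \<rho>0 - {a} \<Longrightarrow> deriv F z \<noteq> 0"
  proof (rule isolated_zeros[OF hol' open_ball connected_ball _ crit \<beta>])
    show "a \<in> ball a \<rho>" using \<open>0 < \<rho>\<close> by simp
  qed (rule that)
  have "\<forall>\<^sub>F n in sequentially. norm (\<epsilon> n) < min \<rho>0 \<rho>"
    by (rule order_tendstoD(2)[OF tendsto_norm_zero[OF \<epsilon>(1)]]) (use \<open>0 < \<rho>0\<close> \<open>0 < \<rho>\<close> in simp)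
  then obtain N where N: "\<And>n. n \<ge> N \<Longrightarrow> norm (\<epsilon> n) < min \<rho>0 \<rho>"
    unfolding eventually_sequentially by blast
  have "\<not> deriv F constant_on ball a \<rho>"
    using \<beta> crit \<open>0 < \<rho>\<close> unfolding constant_on_def by (metis centre_in_ball)
  then have "\<exists>n\<ge>N. \<exists>x\<in>ball a \<rho>. F x = F (x - \<epsilon> n)"
    using translate_coincidence_near_critical_point[OF hol \<open>0 < \<rho>\<close> _ crit _ \<epsilon>] \<open>0 < \<rho>\<close> by simp
  then obtain n x where "n \<ge> N" "x \<in> ball a \<rho>" "F x = F (x - \<epsilon> n)" by blast
  moreover define \<eta> where "\<eta> = \<epsilon> n"
  ultimately have \<eta>: "norm \<eta> < \<rho>0" "norm \<eta> < \<rho>" "\<eta> \<noteq> 0" and "F x = F (x - \<eta>)"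
    using N \<epsilon>(2) by auto
  with \<open>x \<in> ball a \<rho>\<close> have "\<exists>W. open W \<and> x - \<eta> \<in> W \<and> (\<forall>y\<in>W. F (y + \<eta>) = F y)"
    unfolding \<eta>_def by (intro periodic)
  then obtain W where W: "open W" "x - \<eta> \<in> W" "\<And>y. y \<in> W \<Longrightarrow> F (y + \<eta>) = F y"
    by blast
  (* the local identity continues to the whole ball, so \<eta> is a period of F' there *)
  have "\<forall>\<^sub>F y in nhds (a + \<eta>). y \<in> ball a \<rho>"
    using \<eta>(2) by (intro eventually_nhds_in_open) (auto simp: dist_norm)
  then have "\<forall>\<^sub>F y in nhds (a + \<eta>). F y = F (y - \<eta>)"
    by (rule eventually_mono) (rule holomorphic_translate_eq_on_ball[OF hol \<eta>(2) W \<open>x \<in> ball a \<rho>\<close>])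
  moreover have "F field_differentiable at a"
    using holomorphic_on_imp_differentiable_at[OF hol open_ball] \<open>0 < \<rho>\<close> by simp
  ultimately have "deriv F (a + \<eta>) = deriv F a"
    using deriv_eq_if_translate_eq[where q = "a + \<eta>"] by simp
  then show False
    using isolated[of "a + \<eta>"] \<eta> crit by (simp add: dist_norm)
qed

lemma holomorphic_constant_if_constant_on_open:
  assumes "g holomorphic_on U" "open U" "connected U" "open S" "S \<subseteq> U" "S \<noteq> {}"
    and "\<And>w. w \<in> S \<Longrightarrow> g w = c" and "z \<in> U"
  shows "g z = c"
  by (rule analytic_continuation_open[where f = g and g = "\<lambda>_. c" and s = S and s' = U]) (use assms in auto)

lemma holomorphic_local_inverse:
  assumes hol: "f holomorphic_on S" and "open S" "z \<in> S" "deriv f z \<noteq> 0"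
  obtains N h where "open N" "z \<in> N" "N \<subseteq> S" "open (f ` N)" "h holomorphic_on f ` N"
    "\<And>w. w \<in> N \<Longrightarrow> h (f w) = w"
proof -
  obtain r where "r > 0" "ball z r \<subseteq> S" "inj_on f (ball z r)"
    using has_complex_derivative_locally_injective[OF hol \<open>z \<in> S\<close> \<open>open S\<close> \<open>deriv f z \<noteq> 0\<close>] .
  moreover have holN: "f holomorphic_on ball z r" using hol \<open>ball z r \<subseteq> S\<close> by (rule holomorphic_on_subset)
  moreover obtain h where "h holomorphic_on f ` ball z r" "\<And>w. w \<in> ball z r \<Longrightarrow> h (f w) = w"
    using holomorphic_has_inverse[OF holN open_ball \<open>inj_on f (ball z r)\<close>] by blast
  ultimately show ?thesis
    using that[of "ball z r" h] open_mapping_thm3[OF holN open_ball] by simp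
qed

lemma openin_image_in_homeomorphic_image:
  fixes f g :: "'a::euclidean_space \<Rightarrow> 'b::topological_space"
  assumes hom: "homeomorphism D (g ` D) g g'"
    and "open N" "continuous_on N f" "inj_on f N" "f ` N \<subseteq> g ` D"
  shows "openin (top_of_set (g ` D)) (f ` N)"
proof -
  have cont: "continuous_on N (g' \<circ> f)"
    using hom assms(3,5) unfolding homeomorphism_def by (metis continuous_on_compose continuous_on_subset)
  have inj: "inj_on (g' \<circ> f) N"
    using hom assms(4,5) unfolding homeomorphism_def inj_on_def by (metis comp_apply image_subset_iff)
  have "(g' \<circ> f) ` N \<subseteq> D"
    using hom assms(5) unfolding homeomorphism_def by auto
  then have "openin (top_of_set D) ((g' \<circ> f) ` N)"
    using invariance_of_domain[OF cont \<open>open N\<close> inj] by (rule open_subset)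
  then have "openin (top_of_set (g ` D)) (g ` (g' \<circ> f) ` N)"
    by (rule homeomorphism_imp_open_map[OF hom])
  moreover have "g ` (g' \<circ> f) ` N = f ` N"
    using hom assms(5) unfolding homeomorphism_def by (force simp: image_comp)
  ultimately show ?thesis by simp
qed

lemma open_disc [simp]: "open disc" and connected_disc [simp]: "connected disc"
  unfolding disc_def by auto

lemma lamination_plaque_homeomorphism:
  assumes "lamination \<Lambda> Xl P" "p \<in> Xl"
  obtains g g' where "g \<in> P" "p \<in> g ` disc" "homeomorphism disc (g ` disc) g g'"
proof -
  obtain U T \<phi> \<psi> where "p \<in> U" and hom: "homeomorphism (disc \<times> T) (Xl \<inter> U) (\<lambda>(z, t). \<phi> z t) \<psi>"
    and plaques: "\<forall>t\<in>T. \<phi> 0 t = t \<and> (\<lambda>z. \<phi> z t) \<in> P"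
    using assms unfolding lamination_def flow_box_def by blast
  obtain w s where ws: "\<psi> p = (w, s)" by (cases "\<psi> p") auto
  have "p \<in> Xl \<inter> U" using \<open>p \<in> U\<close> \<open>p \<in> Xl\<close> by blast
  then have "(w, s) \<in> disc \<times> T" "\<phi> w s = p"
    using hom ws unfolding homeomorphism_def by (metis image_eqI, metis case_prod_conv)
  have slice: "homeomorphism disc (disc \<times> {s}) (\<lambda>z. (z, s)) fst"
    by (rule homeomorphismI) (auto intro!: continuous_intros)
  have "homeomorphism (disc \<times> {s}) ((\<lambda>(z, t). \<phi> z t) ` (disc \<times> {s})) (\<lambda>(z, t). \<phi> z t) \<psi>"
    using \<open>(w, s) \<in> disc \<times> T\<close> by (intro homeomorphism_of_subsets[OF hom _ order.refl refl]) auto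
  moreover have "(\<lambda>(z, t). \<phi> z t) ` (disc \<times> {s}) = (\<lambda>z. \<phi> z s) ` disc" by auto
  ultimately have "homeomorphism disc ((\<lambda>z. \<phi> z s) ` disc) (\<lambda>z. \<phi> z s) (fst \<circ> \<psi>)"
    using homeomorphism_compose[OF slice] by (fastforce simp: o_def)
  moreover have "(\<lambda>z. \<phi> z s) \<in> P" using plaques \<open>(w, s) \<in> disc \<times> T\<close> by blast
  moreover have "p \<in> (\<lambda>z. \<phi> z s) ` disc" using \<open>(w, s) \<in> disc \<times> T\<close> \<open>\<phi> w s = p\<close> by force
  ultimately show ?thesis using that by blast
qed

text \<open>Compatibility of the translate with g and relative openness of f ` N in g ` disc keep the
  translate inside f ` N near x; in the chart x1 = fst (f (h x2)) this is local periodicity.\<close>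
lemma translated_plaque_locally_periodic:
  fixes f g :: "complex \<Rightarrow> c2" and h :: "complex \<Rightarrow> complex"
  assumes comp: "compatible (\<lambda>z. f z + (0, \<eta>)) g" and cont: "continuous_on disc f"
    and fN: "f ` N = g ` disc \<inter> V" "open V" "N \<subseteq> disc"
    and h: "open M" "continuous_on M h" "\<And>y. y \<in> M \<Longrightarrow> h y \<in> N \<and> snd (f (h y)) = y"
      "\<And>z. z \<in> N \<Longrightarrow> h (snd (f z)) = z"
    and x: "x \<in> M" "f (h x) + (0, \<eta>) \<in> f ` N"
  shows "\<exists>W. open W \<and> x \<in> W \<and> (\<forall>y\<in>W. fst (f (h (y + \<eta>))) = fst (f (h y)))"
proof -
  define S where "S = {z \<in> disc. f z + (0, \<eta>) \<in> g ` disc}"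
  have "open S" using comp unfolding compatible_def S_def by simp
  have cont_fh: "continuous_on M (\<lambda>y. f (h y) + (0, \<eta>))"
  proof -
    have "h ` M \<subseteq> disc" using h(3) fN(3) by blast
    then have "continuous_on M (f \<circ> h)"
      by (rule continuous_on_compose[OF h(2) continuous_on_subset[OF cont]])
    then show ?thesis unfolding o_def by (intro continuous_intros)
  qed
  define W where "W = (M \<inter> h -` S) \<inter> (\<lambda>y. f (h y) + (0, \<eta>)) -` V"
  have "open (M \<inter> h -` S)" using continuous_open_preimage[OF h(2,1) \<open>open S\<close>] .
  moreover have "continuous_on (M \<inter> h -` S) (\<lambda>y. f (h y) + (0, \<eta>))"
    using cont_fh by (rule continuous_on_subset) blast
  ultimately have "open W"
    unfolding W_def using continuous_open_preimage[OF _ _ fN(2)] by blast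
  moreover have "x \<in> W"
    using x h(3)[of x] fN unfolding W_def S_def by auto
  moreover have "fst (f (h (y + \<eta>))) = fst (f (h y))" if "y \<in> W" for y
  proof -
    have "f (h y) + (0, \<eta>) \<in> f ` N" using that fN(1) unfolding W_def S_def by auto
    then obtain z where "z \<in> N" and z: "f z = f (h y) + (0, \<eta>)" by auto
    moreover have "snd (f z) = y + \<eta>" using z h(3)[of y] that unfolding W_def by simp
    ultimately show ?thesis using h(4)[of z] z by simp
  qed
  ultimately show ?thesis by blast
qed

definition vertical_plaque :: "(complex \<Rightarrow> c2) \<Rightarrow> bool" where
  "vertical_plaque f \<longleftrightarrow> (\<exists>c. \<forall>z\<in>disc. fst (f z) = c)"

text \<open>Near a point where its second coordinate has nonzero derivative, a plaque is a graph over that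
  coordinate (h inverts it), relatively open in an embedded plaque g of a flow box.\<close>
lemma plaque_graph_chart:
  assumes lam: "lamination \<Lambda> Xl P" and f: "f \<in> P" "z0 \<in> disc"
    and "deriv (\<lambda>w. snd (f w)) z0 \<noteq> 0"
  obtains g N h V where "g \<in> P" "open N" "z0 \<in> N" "N \<subseteq> disc" "open ((\<lambda>w. snd (f w)) ` N)"
    "h holomorphic_on (\<lambda>w. snd (f w)) ` N" "\<And>w. w \<in> N \<Longrightarrow> h (snd (f w)) = w"
    "open V" "f ` N = g ` disc \<inter> V"
proof -
  have "holo_disc f" and "f ` disc \<subseteq> Xl" using lam f unfolding lamination_def by auto
  then have hol1: "(\<lambda>w. fst (f w)) holomorphic_on disc" and hol2: "(\<lambda>w. snd (f w)) holomorphic_on disc"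
    and "inj_on f disc"
    unfolding holo_disc_def by auto
  have "continuous_on disc f"
    using continuous_on_Pair[OF holomorphic_on_imp_continuous_on[OF hol1] holomorphic_on_imp_continuous_on[OF hol2]]
    by simp
  obtain g g' where "g \<in> P" "f z0 \<in> g ` disc" and hom: "homeomorphism disc (g ` disc) g g'"
    using lamination_plaque_homeomorphism[OF lam] \<open>f ` disc \<subseteq> Xl\<close> f(2) by blast
  define B where "B = {z \<in> disc. f z \<in> g ` disc}"
  have "open B" using lam f(1) \<open>g \<in> P\<close> unfolding lamination_def compatible_def B_def by blast
  obtain N h where N: "open N" "z0 \<in> N" "N \<subseteq> B" "open ((\<lambda>w. snd (f w)) ` N)"
      "h holomorphic_on (\<lambda>w. snd (f w)) ` N" "\<And>w. w \<in> N \<Longrightarrow> h (snd (f w)) = w"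
    using holomorphic_local_inverse[OF holomorphic_on_subset[OF hol2] \<open>open B\<close> _ assms(4)]
      f(2) \<open>f z0 \<in> g ` disc\<close> unfolding B_def by blast
  have "N \<subseteq> disc" using \<open>N \<subseteq> B\<close> unfolding B_def by blast
  have "openin (top_of_set (g ` disc)) (f ` N)"
    using \<open>N \<subseteq> disc\<close> \<open>N \<subseteq> B\<close> \<open>inj_on f disc\<close>
    by (intro openin_image_in_homeomorphic_image[OF hom \<open>open N\<close>])
       (auto simp: B_def intro: continuous_on_subset[OF \<open>continuous_on disc f\<close>] inj_on_subset)
  then obtain V where "open V" "f ` N = g ` disc \<inter> V" unfolding openin_open by blast
  with that \<open>g \<in> P\<close> N \<open>N \<subseteq> disc\<close> show ?thesis by blast
qed

lemma vertical_plaque_if_critical: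
  assumes lam: "lamination \<Lambda> Xl P"
    and \<epsilon>: "\<epsilon> \<longlonglongrightarrow> 0" "\<forall>n. \<epsilon> n \<noteq> 0" "\<forall>n. trans_invariant Xl P (0, \<epsilon> n)"
    and f: "f \<in> P" "z0 \<in> disc" "deriv (\<lambda>w. fst (f w)) z0 = 0"
  shows "vertical_plaque f"
proof -
  define f1 where "f1 = (\<lambda>w. fst (f w))"
  define f2 where "f2 = (\<lambda>w. snd (f w))"
  have "holo_disc f" using lam f unfolding lamination_def by auto
  then have hol1: "f1 holomorphic_on disc" and hol2: "f2 holomorphic_on disc" and "deriv f2 z0 \<noteq> 0"
    using f unfolding holo_disc_def dvec_def f1_def f2_def by (auto simp: zero_prod_def)
  then have cont: "continuous_on disc f"
    using continuous_on_Pair[OF holomorphic_on_imp_continuous_on[OF hol1] holomorphic_on_imp_continuous_on[OF hol2]]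
    by (simp add: f1_def f2_def)
  obtain g N h V where "g \<in> P" "open N" "z0 \<in> N" "N \<subseteq> disc" "open (f2 ` N)" "h holomorphic_on f2 ` N"
      and hf2: "\<And>w. w \<in> N \<Longrightarrow> h (f2 w) = w" and "open V" "f ` N = g ` disc \<inter> V"
    using plaque_graph_chart[OF lam f(1,2)] \<open>deriv f2 z0 \<noteq> 0\<close> unfolding f2_def by blast
  define M where "M = f2 ` N"
  have hM: "h y \<in> N \<and> f2 (h y) = y" if "y \<in> M" for y using that hf2 unfolding M_def by auto
  (* near f z0 the plaque is the graph x1 = F x2 over M, with a critical point at f2 z0 *)
  define F where "F y = f1 (h y)" for y
  have holF: "F holomorphic_on M"
    unfolding F_def M_def using \<open>h holomorphic_on f2 ` N\<close> hol1 hM \<open>N \<subseteq> disc\<close>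
    by (intro holomorphic_on_compose_gen[OF _ hol1, unfolded o_def]) (auto simp: M_def)
  have "deriv F (f2 z0) = 0"
  proof -
    have "h field_differentiable at (f2 z0)"
      using \<open>h holomorphic_on f2 ` N\<close> \<open>open (f2 ` N)\<close> \<open>z0 \<in> N\<close>
      by (meson holomorphic_on_imp_differentiable_at image_eqI)
    moreover have "f1 field_differentiable at (h (f2 z0))"
      using hol1 f(2) hf2[OF \<open>z0 \<in> N\<close>] by (simp add: holomorphic_on_imp_differentiable_at)
    ultimately show ?thesis
      using deriv_chain[of h "f2 z0" f1] f(3) hf2[OF \<open>z0 \<in> N\<close>] unfolding F_def f1_def by (simp add: o_def)
  qed
  obtain r where "r > 0" "ball (f2 z0) r \<subseteq> M"
    using \<open>open (f2 ` N)\<close> \<open>z0 \<in> N\<close> unfolding M_def open_contains_ball by blast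
  define \<rho> where "\<rho> = r / 2"
  have "\<rho> > 0" "ball (f2 z0) (2 * \<rho>) \<subseteq> M"
    using \<open>r > 0\<close> \<open>ball (f2 z0) r \<subseteq> M\<close> unfolding \<rho>_def by simp_all
  have "F constant_on ball (f2 z0) \<rho>"
  proof (rule holomorphic_constant_if_coincidences_periodic[OF _ \<open>\<rho> > 0\<close> \<open>deriv F (f2 z0) = 0\<close> \<epsilon>(1,2)])
    show "F holomorphic_on ball (f2 z0) (2 * \<rho>)"
      using holF \<open>ball (f2 z0) (2 * \<rho>) \<subseteq> M\<close> by (rule holomorphic_on_subset)
    fix n x assume x: "x \<in> ball (f2 z0) \<rho>" "norm (\<epsilon> n) < \<rho>" "F x = F (x - \<epsilon> n)"
    have "x - \<epsilon> n \<in> ball (f2 z0) (2 * \<rho>)" "x \<in> ball (f2 z0) (2 * \<rho>)"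
      using x \<open>\<rho> > 0\<close> dist_triangle[of "f2 z0" "x - \<epsilon> n" x] by (auto simp: dist_norm)
    then have "x - \<epsilon> n \<in> M" "x \<in> M" using \<open>ball (f2 z0) (2 * \<rho>) \<subseteq> M\<close> by auto
    then have "f (h (x - \<epsilon> n)) + (0, \<epsilon> n) = f (h x)"
      using hM x(3) unfolding F_def f1_def f2_def by (simp add: prod_eq_iff)
    then have "f (h (x - \<epsilon> n)) + (0, \<epsilon> n) \<in> f ` N" using hM \<open>x \<in> M\<close> by auto
    moreover have "compatible (\<lambda>z. f z + (0, \<epsilon> n)) g"
      using \<epsilon>(3) f(1) \<open>g \<in> P\<close> unfolding trans_invariant_def by blast
    moreover have "continuous_on M h"
      using \<open>h holomorphic_on f2 ` N\<close> unfolding M_def by (rule holomorphic_on_imp_continuous_on)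
    ultimately show "\<exists>W. open W \<and> x - \<epsilon> n \<in> W \<and> (\<forall>y\<in>W. F (y + \<epsilon> n) = F y)"
      using translated_plaque_locally_periodic[OF _ cont \<open>f ` N = g ` disc \<inter> V\<close> \<open>open V\<close> \<open>N \<subseteq> disc\<close>
          _ _ _ _ \<open>x - \<epsilon> n \<in> M\<close>] hM hf2 \<open>open (f2 ` N)\<close>
      unfolding F_def f1_def f2_def M_def by simp
  qed
  then obtain c where c: "\<And>y. y \<in> ball (f2 z0) \<rho> \<Longrightarrow> F y = c" unfolding constant_on_def by blast
  define W where "W = N \<inter> f2 -` ball (f2 z0) \<rho>"
  have "open W"
    unfolding W_def using holomorphic_on_imp_continuous_on[OF holomorphic_on_subset[OF hol2 \<open>N \<subseteq> disc\<close>]]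
    by (rule continuous_open_preimage) (simp_all add: \<open>open N\<close>)
  have "W \<subseteq> disc" "W \<noteq> {}" using \<open>z0 \<in> N\<close> \<open>\<rho> > 0\<close> \<open>N \<subseteq> disc\<close> unfolding W_def by auto
  have "f1 z = c" if "z \<in> disc" for z
  proof (rule holomorphic_constant_if_constant_on_open[OF hol1 open_disc connected_disc \<open>open W\<close>
        \<open>W \<subseteq> disc\<close> \<open>W \<noteq> {}\<close> _ that])
    show "f1 w = c" if "w \<in> W" for w
      using c[of "f2 w"] hf2[of w] that unfolding W_def F_def by simp
  qed
  then show ?thesis unfolding vertical_plaque_def f1_def by blast
qed

definition vertical_locus :: "(complex \<Rightarrow> c2) set \<Rightarrow> c2 set" where
  "vertical_locus P = (\<Union>f\<in>{f \<in> P. vertical_plaque f}. f ` disc)"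

lemma vertical_plaque_if_meets_vertical_plaque:
  assumes lam: "lamination \<Lambda> Xl P" and "f \<in> P" "vertical_plaque f" "g \<in> P"
    and "w \<in> disc" "g w \<in> f ` disc"
  shows "vertical_plaque g"
proof -
  obtain c where c: "\<And>z. z \<in> disc \<Longrightarrow> fst (f z) = c"
    using \<open>vertical_plaque f\<close> unfolding vertical_plaque_def by blast
  define S where "S = {z \<in> disc. g z \<in> f ` disc}"
  have "open S" using lam \<open>f \<in> P\<close> \<open>g \<in> P\<close> unfolding lamination_def compatible_def S_def by blast
  have hol: "(\<lambda>z. fst (g z)) holomorphic_on disc"
    using lam \<open>g \<in> P\<close> unfolding lamination_def holo_disc_def by blast
  have "S \<subseteq> disc" "S \<noteq> {}" using \<open>w \<in> disc\<close> \<open>g w \<in> f ` disc\<close> unfolding S_def by auto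
  have "fst (g z) = c" if "z \<in> disc" for z
  proof (rule holomorphic_constant_if_constant_on_open[OF hol open_disc connected_disc \<open>open S\<close>
        \<open>S \<subseteq> disc\<close> \<open>S \<noteq> {}\<close> _ that])
    show "fst (g z) = c" if "z \<in> S" for z using that c unfolding S_def by auto
  qed
  then show ?thesis unfolding vertical_plaque_def by blast
qed

lemma vertical_if_on_vertical_plaque:
  assumes "f \<in> P" "vertical_plaque f" "p \<in> f ` disc"
  shows "vertical P p"
proof -
  obtain c where c: "\<And>z. z \<in> disc \<Longrightarrow> fst (f z) = c"
    using \<open>vertical_plaque f\<close> unfolding vertical_plaque_def by blast
  obtain z where "z \<in> disc" "f z = p" using \<open>p \<in> f ` disc\<close> by blast
  have "\<forall>\<^sub>F w in nhds z. fst (f w) = c"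
    using \<open>z \<in> disc\<close> c by (intro eventually_nhds_in_open[THEN eventually_mono, OF open_disc]) auto
  then have "deriv (\<lambda>w. fst (f w)) z = deriv (\<lambda>_. c) z" by (rule deriv_cong_ev) simp
  then show ?thesis
    unfolding vertical_def dvec_def using \<open>f \<in> P\<close> \<open>z \<in> disc\<close> \<open>f z = p\<close> by auto
qed

lemma vertical_locus_subset: "lamination \<Lambda> Xl P \<Longrightarrow> vertical_locus P \<subseteq> Xl"
  unfolding lamination_def vertical_locus_def by blast

lemma homeomorphism_continuous_on_transversal:
  assumes hom: "homeomorphism (S \<times> T) X (\<lambda>(z, t). \<phi> z t) \<psi>" and "w \<in> S"
  shows "continuous_on X (\<lambda>y. \<phi> w (snd (\<psi> y)))"
proof -
  have "continuous_on (S \<times> T) (\<lambda>(z, t). \<phi> z t)" using hom unfolding homeomorphism_def by blast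
  moreover have "continuous_on X (\<lambda>y. (w, snd (\<psi> y)))"
    using hom unfolding homeomorphism_def by (intro continuous_intros) auto
  moreover have "(\<lambda>y. (w, snd (\<psi> y))) ` X \<subseteq> S \<times> T"
    using hom \<open>w \<in> S\<close> unfolding homeomorphism_def by (auto simp: mem_Times_iff)
  ultimately have "continuous_on X (\<lambda>y. (\<lambda>(z, t). \<phi> z t) (w, snd (\<psi> y)))"
    by (rule continuous_on_compose2)
  then show ?thesis by simp
qed

text \<open>Within a flow box, verticality of the plaque through a point is a closed condition on the
  transversal coordinate of that point.\<close>

lemma vertical_if_in_closure_vertical_locus:
  assumes lam: "lamination \<Lambda> Xl P" and "q \<in> Xl" "q \<in> closure (vertical_locus P)"
  shows "vertical P q"
proof -
  obtain U T \<phi> \<psi> where "open U" "q \<in> U" and hom: "homeomorphism (disc \<times> T) (Xl \<inter> U) (\<lambda>(z, t). \<phi> z t) \<psi>"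
    and plaques: "\<forall>t\<in>T. \<phi> 0 t = t \<and> (\<lambda>z. \<phi> z t) \<in> P"
    using lam \<open>q \<in> Xl\<close> unfolding lamination_def flow_box_def by blast
  have \<psi>: "fst (\<psi> y) \<in> disc" "snd (\<psi> y) \<in> T" "\<phi> (fst (\<psi> y)) (snd (\<psi> y)) = y"
    if "y \<in> Xl \<inter> U" for y
  proof -
    have "\<psi> y \<in> disc \<times> T" using hom that unfolding homeomorphism_def by blast
    then show "fst (\<psi> y) \<in> disc" "snd (\<psi> y) \<in> T" by (auto simp: mem_Times_iff)
    show "\<phi> (fst (\<psi> y)) (snd (\<psi> y)) = y"
      using hom that unfolding homeomorphism_def by (simp add: case_prod_beta)
  qed
  have "0 \<in> disc" unfolding disc_def by simp
  have "fst (\<phi> z (snd (\<psi> q))) = fst (\<phi> 0 (snd (\<psi> q)))" if "z \<in> disc" for z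
  proof -
    define \<Phi> where "\<Phi> y = fst (\<phi> z (snd (\<psi> y))) - fst (\<phi> 0 (snd (\<psi> y)))" for y
    have "continuous_on (Xl \<inter> U) \<Phi>"
      unfolding \<Phi>_def using homeomorphism_continuous_on_transversal[OF hom \<open>z \<in> disc\<close>]
        homeomorphism_continuous_on_transversal[OF hom \<open>0 \<in> disc\<close>]
      by (intro continuous_intros)
    then obtain C where "closed C" and C: "{y \<in> Xl \<inter> U. \<Phi> y = 0} = Xl \<inter> U \<inter> C"
      using continuous_closedin_preimage_constant unfolding closedin_closed by blast
    have "U \<inter> vertical_locus P \<subseteq> C"
    proof
      fix y assume y: "y \<in> U \<inter> vertical_locus P"
      then obtain f where "f \<in> P" "vertical_plaque f" "y \<in> f ` disc" unfolding vertical_locus_def by blast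
      have "y \<in> Xl \<inter> U" using y vertical_locus_subset[OF lam] by blast
      then have "vertical_plaque (\<lambda>w. \<phi> w (snd (\<psi> y)))"
        using vertical_plaque_if_meets_vertical_plaque[OF lam \<open>f \<in> P\<close> \<open>vertical_plaque f\<close>, of _ "fst (\<psi> y)"]
          plaques \<psi>[of y] \<open>y \<in> f ` disc\<close> by simp
      then have "\<Phi> y = 0"
        unfolding \<Phi>_def vertical_plaque_def using \<open>z \<in> disc\<close> \<open>0 \<in> disc\<close> by auto
      then show "y \<in> C" using C \<open>y \<in> Xl \<inter> U\<close> by blast
    qed
    then have "closure (U \<inter> vertical_locus P) \<subseteq> C" using \<open>closed C\<close> by (rule closure_minimal)
    moreover have "q \<in> closure (U \<inter> vertical_locus P)"
      using open_Int_closure_subset[OF \<open>open U\<close>] \<open>q \<in> U\<close> assms(3) by blast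
    ultimately have "q \<in> C" by blast
    then show ?thesis using C \<open>q \<in> Xl\<close> \<open>q \<in> U\<close> unfolding \<Phi>_def by auto
  qed
  then have "vertical_plaque (\<lambda>w. \<phi> w (snd (\<psi> q)))" unfolding vertical_plaque_def by blast
  moreover have "(\<lambda>w. \<phi> w (snd (\<psi> q))) \<in> P" using plaques \<psi>(2)[of q] \<open>q \<in> Xl\<close> \<open>q \<in> U\<close> by blast
  moreover have "q \<in> (\<lambda>w. \<phi> w (snd (\<psi> q))) ` disc"
    using \<psi>(1,3)[of q] \<open>q \<in> Xl\<close> \<open>q \<in> U\<close> by (intro image_eqI[of _ _ "fst (\<psi> q)"]) auto
  ultimately show ?thesis by (metis vertical_if_on_vertical_plaque)
qed

lemma leaf_subset_vertical_locus:
  assumes lam: "lamination \<Lambda> Xl P" and "p \<in> vertical_locus P"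
  shows "leaf P p \<subseteq> vertical_locus P"
proof
  fix y assume "y \<in> leaf P p"
  then have "(p, y) \<in> (same_plaque P)\<^sup>*" unfolding leaf_def by simp
  then show "y \<in> vertical_locus P"
  proof (induction rule: rtrancl_induct)
    case base
    show ?case using \<open>p \<in> vertical_locus P\<close> .
  next
    case (step a b)
    then obtain g where g: "g \<in> P" "a \<in> g ` disc" "b \<in> g ` disc" unfolding same_plaque_def by blast
    obtain f where "f \<in> P" "vertical_plaque f" "a \<in> f ` disc"
      using step.IH unfolding vertical_locus_def by blast
    moreover obtain w where "w \<in> disc" "g w = a" using g(2) by blast
    ultimately have "vertical_plaque g"
      using vertical_plaque_if_meets_vertical_plaque[OF lam _ _ g(1)] by blast
    then show ?case using g unfolding vertical_locus_def by blast
  qed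
qed

lemma vertical_locus_translate:
  assumes lam: "lamination \<Lambda> Xl P" and "y \<in> vertical_locus P" "a \<in> \<Lambda>"
  shows "y + a \<in> vertical_locus P"
proof -
  obtain f where "f \<in> P" "vertical_plaque f" "y \<in> f ` disc"
    using \<open>y \<in> vertical_locus P\<close> unfolding vertical_locus_def by blast
  moreover have "(\<lambda>z. f z + a) \<in> P" using lam \<open>f \<in> P\<close> \<open>a \<in> \<Lambda>\<close> unfolding lamination_def by blast
  moreover have "vertical_plaque (\<lambda>z. f z + a)"
    using \<open>vertical_plaque f\<close> unfolding vertical_plaque_def by auto
  ultimately show ?thesis unfolding vertical_locus_def by blast
qed

theorem proposition3p1:
  fixes \<Lambda> Xl :: "c2 set" and P :: "(complex \<Rightarrow> c2) set" and \<epsilon> :: "nat \<Rightarrow> complex"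
  assumes "minimal_lamination \<Lambda> Xl P"
    and "\<epsilon> \<longlonglongrightarrow> 0" and "\<forall>n. \<epsilon> n \<noteq> 0"
    and "\<forall>n. trans_invariant Xl P (0, \<epsilon> n)"
  shows "(\<forall>p\<in>Xl. vertical P p) \<or> (\<forall>p\<in>Xl. \<not> vertical P p)"
proof (rule disjCI)
  assume "\<not> (\<forall>p\<in>Xl. \<not> vertical P p)"
  then obtain p f z0 where "p \<in> Xl" "f \<in> P" "z0 \<in> disc" "f z0 = p" "deriv (\<lambda>w. fst (f w)) z0 = 0"
    unfolding vertical_def dvec_def by auto
  have lam: "lamination \<Lambda> Xl P" using assms(1) unfolding minimal_lamination_def by blast
  have "vertical_plaque f"
    by (rule vertical_plaque_if_critical[OF lam assms(2-4) \<open>f \<in> P\<close> \<open>z0 \<in> disc\<close>]) fact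
  then have "p \<in> vertical_locus P"
    using \<open>f \<in> P\<close> \<open>z0 \<in> disc\<close> \<open>f z0 = p\<close> unfolding vertical_locus_def by blast
  then have "(\<Union>a\<in>\<Lambda>. (\<lambda>q. q + a) ` leaf P p) \<subseteq> vertical_locus P"
    using leaf_subset_vertical_locus[OF lam] vertical_locus_translate[OF lam] by blast
  then have "closure (\<Union>a\<in>\<Lambda>. (\<lambda>q. q + a) ` leaf P p) \<subseteq> closure (vertical_locus P)"
    by (rule closure_mono)
  moreover have "Xl \<subseteq> closure (\<Union>a\<in>\<Lambda>. (\<lambda>q. q + a) ` leaf P p)"
    using assms(1) \<open>p \<in> Xl\<close> unfolding minimal_lamination_def by blast
  ultimately have "Xl \<subseteq> closure (vertical_locus P)" by blast
  then show "\<forall>q\<in>Xl. vertical P q"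
    using vertical_if_in_closure_vertical_locus[OF lam] by blast
qed

end
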